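(* Consider the contextual bandit problem with finite policy class $\Theta$ and $K$ actions. For any sequence $(x_1,\boldsymbol{c}_1),\ldots,(x_T,\boldsymbol{c}_T)$, EXP4 with its learning rate $\eta'$ tuned appropriately as a function of $T,K,|\Theta|$ and the given range bound $\rho_T$ is $\big(\tfrac12,\mathcal{O}(\sqrt{KT\ln|\Theta|})\big)$-weakly-stable.
   Context: Contextual bandits: on each round $t=1,\ldots,T$ a context $x_t$ is revealed, the learner picks a policy $\theta_t\in\Theta$, each policy being a map $\theta:\mathcal{X}\to[K]$, and the loss is $f_t(\theta,x)=c_{t,\theta(x)}$ for $\boldsymbol{c}_t\in[0,1]^K$; the learner observes only $f_t(\theta_t,x_t)$. Regret w.r.t. $\Theta$: $\sup_{\theta\in\Theta}\mathbb{E}[\sum_t f_t(\theta_t,x_t)-f_t(\theta,x_t)]$. Induced environment: given the environment $\mathcal{E}$ producing the fixed sequence, an environment $\mathcal{E}'$ induced by importance weighting acts on each round $t$: picks an arbitrary $p_t\in[0,1]$ (possibly history dependent), reveals $x_t$, the learner picks $\theta_t$, and with probability $p_t$ the loss function becomes $f'_t=f_t/p_t$, otherwise $f'_t\equiv0$; the learner observes $f'_t(\theta_t,x_t)$. Weak stability: for $\alpha\in(0,1]$ and non-decreasing $\mathcal{R}$, an algorithm that receives a number $\rho_T$ ahead of time is $(\alpha,\mathcal{R})$-weakly-stable with respect to $\mathcal{E}$ if its regret under $\mathcal{E}$ is $\mathcal{R}(T)$ and under every induced $\mathcal{E}'$ with $\rho_T\ge\max_t1/p_t$, $\sup_{\theta\in\Theta}\mathbb{E}[\sum_t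 f'_t(\theta_t,x_t)-f'_t(\theta,x_t)]\le\rho_T^\alpha\mathcal{R}(T)$. EXP4 with learning rate $\eta'>0$: weights $w_1$ uniform on $\Theta$; on round $t$ sample $\theta_t\sim w_t$, let $q_t(a)=\sum_{\theta:\theta(x_t)=a}w_t(\theta)$, observe loss $\ell_t$, set $\hat c_t(a)=\ell_t\mathbf{1}\{\theta_t(x_t)=a\}/q_t(a)$ for $a\in[K]$, and update $w_{t+1}(\theta)\propto w_t(\theta)\exp(-\eta'\hat c_t(\theta(x_t)))$. *)

theory Defs
  imports "HOL-Probability.Probability"
begin

text \<open>Contextual bandits with actions 0,...,K-1 (i.e. [K]), policies 'x => nat,
  rounds indexed 0,...,T-1. A round record of the induced environment is
  (theta_t, p_t, b_t): the learner's chosen policy, the environment's probability p_t,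
  and the coin b_t (True with probability p_t, in which case f'_t = f_t / p_t,
  otherwise f'_t = 0).\<close>

type_synonym 'x round_rec = "('x \<Rightarrow> nat) \<times> real \<times> bool"

definition ind_loss :: "(nat \<Rightarrow> nat \<Rightarrow> real) \<Rightarrow> (nat \<Rightarrow> 'x) \<Rightarrow> nat \<Rightarrow> real \<times> bool \<Rightarrow> ('x \<Rightarrow> nat) \<Rightarrow> real" where
  "ind_loss c x t pb \<theta> = (if snd pb then c t (\<theta> (x t)) / fst pb else 0)"

definition exp4_update :: "real \<Rightarrow> ('x \<Rightarrow> nat) set \<Rightarrow> 'x \<Rightarrow> ('x \<Rightarrow> nat) \<Rightarrow> real
    \<Rightarrow> (('x \<Rightarrow> nat) \<Rightarrow> real) \<Rightarrow> (('x \<Rightarrow> nat) \<Rightarrow> real)" where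
  "exp4_update \<eta> \<Theta> xt tht l w =
     (let q = (\<lambda>a. \<Sum>\<theta>\<in>{\<theta>\<in>\<Theta>. \<theta> xt = a}. w \<theta>);
          chat = (\<lambda>a. l * (if tht xt = a then 1 else 0) / q a);
          u = (\<lambda>\<theta>. if \<theta> \<in> \<Theta> then w \<theta> * exp (- \<eta> * chat (\<theta> xt)) else 0)
      in (\<lambda>\<theta>. u \<theta> / (\<Sum>\<theta>'\<in>\<Theta>. u \<theta>')))"

primrec exp4_weights :: "real \<Rightarrow> ('x \<Rightarrow> nat) set \<Rightarrow> (nat \<Rightarrow> 'x) \<Rightarrow> (nat \<Rightarrow> ('x \<Rightarrow> nat) \<times> real)
    \<Rightarrow> nat \<Rightarrow> (('x \<Rightarrow> nat) \<Rightarrow> real)" where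
  "exp4_weights \<eta> \<Theta> x obs 0 = (\<lambda>\<theta>. if \<theta> \<in> \<Theta> then 1 / real (card \<Theta>) else 0)"
| "exp4_weights \<eta> \<Theta> x obs (Suc t) =
     exp4_update \<eta> \<Theta> (x t) (fst (obs t)) (snd (obs t)) (exp4_weights \<eta> \<Theta> x obs t)"

definition observations :: "(nat \<Rightarrow> nat \<Rightarrow> real) \<Rightarrow> (nat \<Rightarrow> 'x) \<Rightarrow> 'x round_rec list
    \<Rightarrow> nat \<Rightarrow> ('x \<Rightarrow> nat) \<times> real" where
  "observations c x h s = (fst (h ! s), ind_loss c x s (snd (h ! s)) (fst (h ! s)))"

primrec exp4_traj :: "real \<Rightarrow> ('x \<Rightarrow> nat) set \<Rightarrow> (nat \<Rightarrow> 'x) \<Rightarrow> (nat \<Rightarrow> nat \<Rightarrow> real)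
    \<Rightarrow> (nat \<Rightarrow> 'x round_rec list \<Rightarrow> real) \<Rightarrow> nat \<Rightarrow> 'x round_rec list pmf" where
  "exp4_traj \<eta> \<Theta> x c P 0 = return_pmf []"
| "exp4_traj \<eta> \<Theta> x c P (Suc n) =
     bind_pmf (exp4_traj \<eta> \<Theta> x c P n) (\<lambda>h.
       bind_pmf (embed_pmf (exp4_weights \<eta> \<Theta> x (observations c x h) n)) (\<lambda>\<theta>.
         bind_pmf (bernoulli_pmf (P n h)) (\<lambda>b.
           return_pmf (h @ [(\<theta>, P n h, b)]))))"

definition exp4_regret :: "real \<Rightarrow> ('x \<Rightarrow> nat) set \<Rightarrow> (nat \<Rightarrow> 'x) \<Rightarrow> (nat \<Rightarrow> nat \<Rightarrow> real)
    \<Rightarrow> (nat \<Rightarrow> 'x round_rec list \<Rightarrow> real) \<Rightarrow> nat \<Rightarrow> ('x \<Rightarrow> nat) \<Rightarrow> real" where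
  "exp4_regret \<eta> \<Theta> x c P T \<theta> =
     measure_pmf.expectation (exp4_traj \<eta> \<Theta> x c P T)
       (\<lambda>h. \<Sum>t<T. ind_loss c x t (snd (h ! t)) (fst (h ! t)) - ind_loss c x t (snd (h ! t)) \<theta>)"

end

theory Submission
  imports Defs
begin

text \<open>EXP4 is Hedge run on the importance-weighted estimates
  \<open>L\<^sub>t \<theta> = \<ell>\<^sub>t [\<theta> x\<^sub>t = \<theta>\<^sub>t x\<^sub>t] / q\<^sub>t (\<theta> x\<^sub>t)\<close>, where \<open>q\<^sub>t a\<close> is the weight of the policies
  choosing \<open>a\<close>. Along every history the Hedge potential argument bounds
  \<open>\<Sum>\<^sub>t \<langle>w\<^sub>t, L\<^sub>t\<rangle> - \<Sum>\<^sub>t L\<^sub>t \<theta>\<^sup>*\<close> by \<open>ln |\<Theta>| / \<eta> + \<eta>/2 \<Sum>\<^sub>t \<langle>w\<^sub>t, L\<^sub>t\<^sup>2\<rangle>\<close>, and \<open>\<langle>w\<^sub>t, L\<^sub>t\<rangle>\<close>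
  is exactly the observed loss. Conditionally on the past, \<open>L\<^sub>t \<theta>\<^sup>*\<close> and \<open>f'\<^sub>t \<theta>\<^sup>*\<close> both have
  mean \<open>c\<^sub>t (\<theta>\<^sup>* x\<^sub>t)\<close>, while the second moment has mean \<open>\<Sum>\<^sub>\<theta> w\<^sub>t \<theta> c\<^sup>2 / (p\<^sub>t q\<^sub>t) \<le> K / p\<^sub>t \<le> \<rho> K\<close>.
  Hence the regret is at most \<open>ln |\<Theta>| / \<eta> + \<eta> \<rho> K T / 2\<close>, and
  \<open>\<eta> = \<surd>(2 ln |\<Theta>| / (\<rho> K T))\<close> turns this into \<open>\<surd>(2 \<rho> K T ln |\<Theta>|)\<close>.\<close>

lemma exponential_weights_simplex:
  fixes w L :: "nat \<Rightarrow> 'a \<Rightarrow> real"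
  assumes fin: "finite \<Theta>" and ne: "\<Theta> \<noteq> {}"
    and w0: "\<forall>\<theta>\<in>\<Theta>. w 0 \<theta> = 1 / real (card \<Theta>)"
    and wS: "\<forall>t. \<forall>\<theta>\<in>\<Theta>. w (Suc t) \<theta> =
               w t \<theta> * exp (- \<eta> * L t \<theta>) / (\<Sum>\<theta>'\<in>\<Theta>. w t \<theta>' * exp (- \<eta> * L t \<theta>'))"
  shows "(\<forall>\<theta>\<in>\<Theta>. 0 < w t \<theta>) \<and> sum (w t) \<Theta> = 1"
proof (induction t)
  case 0
  then show ?case using w0 fin ne by (simp add: card_gt_0_iff)
next
  case (Suc t)
  define Z where "Z = (\<Sum>\<theta>'\<in>\<Theta>. w t \<theta>' * exp (- \<eta> * L t \<theta>'))"
  have Z: "0 < Z" unfolding Z_def using Suc fin ne by (intro sum_pos) auto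
  have "sum (w (Suc t)) \<Theta> = (\<Sum>\<theta>\<in>\<Theta>. w t \<theta> * exp (- \<eta> * L t \<theta>)) / Z"
    unfolding sum_divide_distrib using wS Z_def by (intro sum.cong) auto
  then show ?case using wS Suc Z Z_def by auto
qed

lemma exp_minus_le_quadratic:
  fixes z :: real
  assumes "0 \<le> z"
  shows "exp (- z) \<le> 1 - z + z\<^sup>2 / 2"
proof -
  have pos: "0 < 1 + z + z\<^sup>2 / 2" using assms by (simp add: add_pos_nonneg)
  have "exp (- z) = 1 / exp z" by (simp add: exp_minus field_simps)
  also have "\<dots> \<le> 1 / (1 + z + z\<^sup>2 / 2)"
    using exp_lower_Taylor_quadratic[OF assms] pos by (intro divide_left_mono) auto
  also have "\<dots> \<le> 1 - z + z\<^sup>2 / 2"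
  proof -
    have "(1 + z + z\<^sup>2 / 2) * (1 - z + z\<^sup>2 / 2) = 1 + z ^ 4 / 4"
      by (simp add: algebra_simps power2_eq_square power4_eq_xxxx)
    then show ?thesis using pos by (simp add: divide_le_eq mult.commute[of "1 - z + z\<^sup>2 / 2"])
  qed
  finally show ?thesis .
qed

text \<open>The one-step potential inequality behind Hedge: combine \<open>ln Z \<le> Z - 1\<close> with
  \<open>exp (-z) \<le> 1 - z + z\<^sup>2/2\<close>.\<close>
lemma ln_exponential_normalizer_le:
  fixes w L :: "'a \<Rightarrow> real"
  assumes fin: "finite \<Theta>" and ne: "\<Theta> \<noteq> {}" and w: "\<forall>\<theta>\<in>\<Theta>. 0 < w \<theta>" "sum w \<Theta> = 1"
    and L: "\<forall>\<theta>\<in>\<Theta>. 0 \<le> L \<theta>" and \<eta>: "0 \<le> \<eta>"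
  shows "ln (\<Sum>\<theta>\<in>\<Theta>. w \<theta> * exp (- \<eta> * L \<theta>))
           \<le> - \<eta> * (\<Sum>\<theta>\<in>\<Theta>. w \<theta> * L \<theta>) + \<eta>\<^sup>2 / 2 * (\<Sum>\<theta>\<in>\<Theta>. w \<theta> * (L \<theta>)\<^sup>2)"
proof -
  define Z where "Z = (\<Sum>\<theta>\<in>\<Theta>. w \<theta> * exp (- \<eta> * L \<theta>))"
  have "0 < Z" unfolding Z_def using w fin ne by (intro sum_pos) auto
  then have "ln Z \<le> Z - 1" by (rule ln_le_minus_one)
  also have "Z \<le> (\<Sum>\<theta>\<in>\<Theta>. w \<theta> * (1 - \<eta> * L \<theta> + (\<eta> * L \<theta>)\<^sup>2 / 2))"
    unfolding Z_def
  proof (intro sum_mono mult_left_mono)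
    fix \<theta> assume "\<theta> \<in> \<Theta>"
    then show "exp (- \<eta> * L \<theta>) \<le> 1 - \<eta> * L \<theta> + (\<eta> * L \<theta>)\<^sup>2 / 2" "0 \<le> w \<theta>"
      using exp_minus_le_quadratic[of "\<eta> * L \<theta>"] L \<eta> w by auto
  qed
  also have "(\<Sum>\<theta>\<in>\<Theta>. w \<theta> * (1 - \<eta> * L \<theta> + (\<eta> * L \<theta>)\<^sup>2 / 2))
      = sum w \<Theta> - \<eta> * (\<Sum>\<theta>\<in>\<Theta>. w \<theta> * L \<theta>) + \<eta>\<^sup>2 / 2 * (\<Sum>\<theta>\<in>\<Theta>. w \<theta> * (L \<theta>)\<^sup>2)"
    by (simp add: algebra_simps sum.distrib sum_subtractf sum_distrib_left power_mult_distrib)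
  finally show ?thesis unfolding Z_def using w by simp
qed

lemma exponential_weights_regret:
  fixes w L :: "nat \<Rightarrow> 'a \<Rightarrow> real"
  assumes fin: "finite \<Theta>" and \<theta>s: "\<theta>s \<in> \<Theta>" and \<eta>: "0 < \<eta>"
    and w0: "\<forall>\<theta>\<in>\<Theta>. w 0 \<theta> = 1 / real (card \<Theta>)"
    and wS: "\<forall>t. \<forall>\<theta>\<in>\<Theta>. w (Suc t) \<theta> =
               w t \<theta> * exp (- \<eta> * L t \<theta>) / (\<Sum>\<theta>'\<in>\<Theta>. w t \<theta>' * exp (- \<eta> * L t \<theta>'))"
    and L: "\<forall>t<T. \<forall>\<theta>\<in>\<Theta>. 0 \<le> L t \<theta>"
  shows "(\<Sum>t<T. \<Sum>\<theta>\<in>\<Theta>. w t \<theta> * L t \<theta>) - (\<Sum>t<T. L t \<theta>s)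
     \<le> ln (real (card \<Theta>)) / \<eta> + \<eta> / 2 * (\<Sum>t<T. \<Sum>\<theta>\<in>\<Theta>. w t \<theta> * (L t \<theta>)\<^sup>2)"
proof -
  have ne: "\<Theta> \<noteq> {}" using \<theta>s by auto
  note simplex = exponential_weights_simplex[OF fin ne w0 wS]
  define M where "M t = (\<Sum>\<theta>\<in>\<Theta>. w t \<theta> * L t \<theta>)" for t
  define V where "V t = (\<Sum>\<theta>\<in>\<Theta>. w t \<theta> * (L t \<theta>)\<^sup>2)" for t
  have potential: "- ln (real (card \<Theta>)) - \<eta> * (\<Sum>t<n. L t \<theta>s) + \<eta> * (\<Sum>t<n. M t)
      - \<eta>\<^sup>2 / 2 * (\<Sum>t<n. V t) \<le> ln (w n \<theta>s)" if "n \<le> T" for n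
    using that
  proof (induction n)
    case 0
    then show ?case using w0 \<theta>s fin ne by (simp add: ln_div card_gt_0_iff)
  next
    case (Suc n)
    define Z where "Z = (\<Sum>\<theta>\<in>\<Theta>. w n \<theta> * exp (- \<eta> * L n \<theta>))"
    have "0 < Z" unfolding Z_def using simplex fin ne by (intro sum_pos) auto
    moreover have "0 < w n \<theta>s" using simplex \<theta>s by blast
    ultimately have "ln (w (Suc n) \<theta>s) = ln (w n \<theta>s) - \<eta> * L n \<theta>s - ln Z"
      using wS \<theta>s by (simp add: Z_def ln_div ln_mult)
    moreover have "ln Z \<le> - \<eta> * M n + \<eta>\<^sup>2 / 2 * V n"
      unfolding Z_def M_def V_def using simplex L Suc.prems \<eta> fin ne
      by (intro ln_exponential_normalizer_le) auto
    ultimately show ?case using Suc by (simp add: ring_distribs diff_divide_distrib add_divide_distrib)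
  qed
  have "w T \<theta>s \<le> sum (w T) \<Theta>"
    using simplex fin \<theta>s by (intro member_le_sum) (auto intro: less_imp_le)
  then have "ln (w T \<theta>s) \<le> 0" using simplex \<theta>s by auto
  with potential[of T] have "\<eta> * ((\<Sum>t<T. M t) - (\<Sum>t<T. L t \<theta>s))
      \<le> ln (real (card \<Theta>)) + \<eta>\<^sup>2 / 2 * (\<Sum>t<T. V t)"
    by (simp add: algebra_simps)
  then show ?thesis
    unfolding M_def[symmetric] V_def[symmetric] using \<eta>
    by (simp add: field_simps power2_eq_square)
qed

lemma expectation_pmf_cong:
  "(\<And>x. x \<in> set_pmf M \<Longrightarrow> f x = g x) \<Longrightarrow>
    measure_pmf.expectation M f = measure_pmf.expectation M (g :: _ \<Rightarrow> real)"
  by (intro integral_cong_AE) (auto intro: AE_pmfI)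

lemma expectation_pmf_mono:
  "finite (set_pmf M) \<Longrightarrow> (\<And>x. x \<in> set_pmf M \<Longrightarrow> f x \<le> g x) \<Longrightarrow>
    measure_pmf.expectation M f \<le> measure_pmf.expectation M (g :: _ \<Rightarrow> real)"
  by (intro integral_mono_AE integrable_measure_pmf_finite) (auto intro: AE_pmfI)

lemma expectation_pmf_add:
  "finite (set_pmf M) \<Longrightarrow> measure_pmf.expectation M (\<lambda>x. f x + g x) =
    measure_pmf.expectation M f + measure_pmf.expectation M (g :: _ \<Rightarrow> real)"
  by (intro Bochner_Integration.integral_add integrable_measure_pmf_finite)

lemma expectation_bind_pmf:
  assumes "finite (set_pmf p)" "\<And>x. x \<in> set_pmf p \<Longrightarrow> finite (set_pmf (f x))"
  shows "measure_pmf.expectation (p \<bind> f) h =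
    measure_pmf.expectation p (\<lambda>a. measure_pmf.expectation (f a) (h :: _ \<Rightarrow> real))"
  using assms
  by (subst pmf_expectation_bind[of "set_pmf p"]) (auto simp: integral_measure_pmf[of "set_pmf p"])

lemma finite_set_pmf_bernoulli: "finite (set_pmf (bernoulli_pmf p))"
  by (rule finite_subset[of _ UNIV]) auto

definition policy_mass :: "('x \<Rightarrow> nat) set \<Rightarrow> (('x \<Rightarrow> nat) \<Rightarrow> real) \<Rightarrow> 'x \<Rightarrow> nat \<Rightarrow> real" where
  "policy_mass \<Theta> w xt a = (\<Sum>\<theta>\<in>{\<theta>\<in>\<Theta>. \<theta> xt = a}. w \<theta>)"

definition loss_estimate :: "('x \<Rightarrow> nat) set \<Rightarrow> (('x \<Rightarrow> nat) \<Rightarrow> real) \<Rightarrow> 'x \<Rightarrow> ('x \<Rightarrow> nat) \<Rightarrow> real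
    \<Rightarrow> ('x \<Rightarrow> nat) \<Rightarrow> real" where
  "loss_estimate \<Theta> w xt tht l \<theta> =
     l * (if tht xt = \<theta> xt then 1 else 0) / policy_mass \<Theta> w xt (\<theta> xt)"

lemma exp4_update_eq:
  "exp4_update \<eta> \<Theta> xt tht l w \<theta> =
    (if \<theta> \<in> \<Theta> then w \<theta> * exp (- \<eta> * loss_estimate \<Theta> w xt tht l \<theta>) else 0) /
    (\<Sum>\<theta>'\<in>\<Theta>. w \<theta>' * exp (- \<eta> * loss_estimate \<Theta> w xt tht l \<theta>'))"
  unfolding exp4_update_def Let_def loss_estimate_def policy_mass_def
  by (auto intro!: sum.cong)

lemma exp4_weights_simplex:
  assumes "finite \<Theta>" "\<Theta> \<noteq> {}"
  shows "(\<forall>\<theta>\<in>\<Theta>. 0 < exp4_weights \<eta> \<Theta> x obs t \<theta>) \<and> sum (exp4_weights \<eta> \<Theta> x obs t) \<Theta> = 1"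
  using assms
  by (rule exponential_weights_simplex[where w = "exp4_weights \<eta> \<Theta> x obs"
        and L = "\<lambda>t. loss_estimate \<Theta> (exp4_weights \<eta> \<Theta> x obs t) (x t) (fst (obs t)) (snd (obs t))" and \<eta> = \<eta>])
     (simp_all add: exp4_update_eq)

lemma exp4_weights_notin: "\<theta> \<notin> \<Theta> \<Longrightarrow> exp4_weights \<eta> \<Theta> x obs t \<theta> = 0"
  by (cases t) (simp_all add: exp4_update_eq)

lemma exp4_weights_nonneg:
  assumes "finite \<Theta>" "\<Theta> \<noteq> {}"
  shows "0 \<le> exp4_weights \<eta> \<Theta> x obs t \<theta>"
  using exp4_weights_simplex[OF assms, of \<eta> x obs t]
  by (cases "\<theta> \<in> \<Theta>") (auto simp: exp4_weights_notin intro: less_imp_le)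

lemma exp4_weights_cong:
  "(\<And>s. s < t \<Longrightarrow> obs s = obs' s) \<Longrightarrow> exp4_weights \<eta> \<Theta> x obs t = exp4_weights \<eta> \<Theta> x obs' t"
  by (induction t) auto

lemma exp4_weights_observations_take:
  "exp4_weights \<eta> \<Theta> x (observations c x (take t h)) t = exp4_weights \<eta> \<Theta> x (observations c x h) t"
  by (intro exp4_weights_cong) (auto simp: observations_def)

lemma embed_exp4_weights:
  assumes "finite \<Theta>" "\<Theta> \<noteq> {}" and w_def: "w = exp4_weights \<eta> \<Theta> x obs t"
  shows "pmf (embed_pmf w) = w" "set_pmf (embed_pmf w) = \<Theta>"
    "measure_pmf.expectation (embed_pmf w) f = (\<Sum>\<theta>\<in>\<Theta>. w \<theta> * (f \<theta> :: real))"
proof -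
  note simplex = exp4_weights_simplex[OF assms(1,2), of \<eta> x obs t, folded w_def]
  have nonneg: "\<And>\<theta>. 0 \<le> w \<theta>" unfolding w_def using assms(1,2) by (rule exp4_weights_nonneg)
  have "(\<integral>\<^sup>+\<theta>. ennreal (w \<theta>) \<partial>count_space UNIV) = (\<Sum>\<theta>\<in>\<Theta>. ennreal (w \<theta>))"
    using assms unfolding w_def by (intro nn_integral_count_space') (auto simp: exp4_weights_notin)
  also have "\<dots> = 1" using nonneg simplex by simp
  finally have total: "(\<integral>\<^sup>+\<theta>. ennreal (w \<theta>) \<partial>count_space UNIV) = 1" .
  show pmf: "pmf (embed_pmf w) = w" using pmf_embed_pmf[OF nonneg total] by auto
  show set: "set_pmf (embed_pmf w) = \<Theta>"
    using set_embed_pmf[OF nonneg total] simplex unfolding w_def by auto (metis exp4_weights_notin)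
  show "measure_pmf.expectation (embed_pmf w) f = (\<Sum>\<theta>\<in>\<Theta>. w \<theta> * f \<theta>)"
    using assms pmf set by (subst integral_measure_pmf[of \<Theta>]) auto
qed

lemma exp4_traj_support:
  assumes "finite \<Theta>" "\<Theta> \<noteq> {}"
  shows "finite (set_pmf (exp4_traj \<eta> \<Theta> x c P n)) \<and>
    (\<forall>h\<in>set_pmf (exp4_traj \<eta> \<Theta> x c P n). length h = n \<and>
       (\<forall>t<n. fst (h ! t) \<in> \<Theta> \<and> fst (snd (h ! t)) = P t (take t h)))"
proof (induction n)
  case 0
  then show ?case by simp
next
  case (Suc n)
  note embed = embed_exp4_weights[OF assms refl]
  have "finite (set_pmf (exp4_traj \<eta> \<Theta> x c P (Suc n)))"
    using Suc embed finite_set_pmf_bernoulli assms by (auto intro!: finite_UN_I)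
  moreover have "length h = Suc n \<and> (\<forall>t<Suc n. fst (h ! t) \<in> \<Theta> \<and> fst (snd (h ! t)) = P t (take t h))"
    if hS: "h \<in> set_pmf (exp4_traj \<eta> \<Theta> x c P (Suc n))" for h
  proof -
    obtain h' \<theta> b where h': "h' \<in> set_pmf (exp4_traj \<eta> \<Theta> x c P n)" and "\<theta> \<in> \<Theta>"
      and h: "h = h' @ [(\<theta>, P n h', b)]"
      using hS embed by auto
    moreover have "length h' = n" using Suc h' by auto
    ultimately show ?thesis
      using Suc h' by (auto simp: nth_append less_Suc_eq)
  qed
  ultimately show ?case by blast
qed

lemma finite_set_pmf_exp4_traj:
  "finite \<Theta> \<Longrightarrow> \<Theta> \<noteq> {} \<Longrightarrow> finite (set_pmf (exp4_traj \<eta> \<Theta> x c P n))"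
  using exp4_traj_support by blast

definition round_expectation :: "real \<Rightarrow> ('x \<Rightarrow> nat) set \<Rightarrow> (nat \<Rightarrow> 'x) \<Rightarrow> (nat \<Rightarrow> nat \<Rightarrow> real)
    \<Rightarrow> (nat \<Rightarrow> 'x round_rec list \<Rightarrow> real) \<Rightarrow> (nat \<Rightarrow> 'x round_rec list \<Rightarrow> 'x round_rec \<Rightarrow> real)
    \<Rightarrow> nat \<Rightarrow> 'x round_rec list \<Rightarrow> real" where
  "round_expectation \<eta> \<Theta> x c P F t h =
     measure_pmf.expectation (embed_pmf (exp4_weights \<eta> \<Theta> x (observations c x h) t)) (\<lambda>\<theta>.
       measure_pmf.expectation (bernoulli_pmf (P t h)) (\<lambda>b. F t h (\<theta>, P t h, b)))"

lemma expectation_exp4_traj_Suc: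
  assumes "finite \<Theta>" "\<Theta> \<noteq> {}"
  shows "measure_pmf.expectation (exp4_traj \<eta> \<Theta> x c P (Suc n)) g =
    measure_pmf.expectation (exp4_traj \<eta> \<Theta> x c P n)
      (round_expectation \<eta> \<Theta> x c P (\<lambda>_ h r. g (h @ [r])) n)"
proof -
  note embed = embed_exp4_weights[OF assms refl]
  have fin: "finite (set_pmf (exp4_traj \<eta> \<Theta> x c P n))"
    using assms by (rule finite_set_pmf_exp4_traj)
  show ?thesis
    unfolding exp4_traj.simps round_expectation_def
    using fin embed assms finite_set_pmf_bernoulli
    by (simp add: expectation_bind_pmf finite_UN_I)
qed

text \<open>Tower property of the round-by-round construction of \<open>exp4_traj\<close>.\<close>
lemma expectation_exp4_traj_sum:
  assumes fin: "finite \<Theta>" and ne: "\<Theta> \<noteq> {}"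
  shows "measure_pmf.expectation (exp4_traj \<eta> \<Theta> x c P T) (\<lambda>h. \<Sum>t<T. F t (take t h) (h ! t)) =
    (\<Sum>t<T. measure_pmf.expectation (exp4_traj \<eta> \<Theta> x c P t) (round_expectation \<eta> \<Theta> x c P F t))"
proof (induction T)
  case 0
  then show ?case by simp
next
  case (Suc T)
  note support = exp4_traj_support[OF fin ne, of \<eta> x c P T]
  note embed = embed_exp4_weights[OF fin ne refl]
  have "round_expectation \<eta> \<Theta> x c P (\<lambda>_ h r. \<Sum>t<Suc T. F t (take t (h @ [r])) ((h @ [r]) ! t)) T h
      = (\<Sum>t<T. F t (take t h) (h ! t)) + round_expectation \<eta> \<Theta> x c P F T h"
    if "h \<in> set_pmf (exp4_traj \<eta> \<Theta> x c P T)" for h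
  proof -
    have "length h = T" using support that by auto
    then have "(\<Sum>t<Suc T. F t (take t (h @ [r])) ((h @ [r]) ! t)) = (\<Sum>t<T. F t (take t h) (h ! t)) + F T h r"
      for r by (simp add: nth_append)
    then show ?thesis
      using exp4_weights_simplex[OF fin ne]
      by (simp add: round_expectation_def embed expectation_pmf_add finite_set_pmf_bernoulli
          distrib_left sum.distrib sum_distrib_right[symmetric])
  qed
  then have "measure_pmf.expectation (exp4_traj \<eta> \<Theta> x c P (Suc T)) (\<lambda>h. \<Sum>t<Suc T. F t (take t h) (h ! t))
     = measure_pmf.expectation (exp4_traj \<eta> \<Theta> x c P T)
         (\<lambda>h. (\<Sum>t<T. F t (take t h) (h ! t)) + round_expectation \<eta> \<Theta> x c P F T h)"
    unfolding expectation_exp4_traj_Suc[OF fin ne] by (rule expectation_pmf_cong)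
  also have "\<dots> = measure_pmf.expectation (exp4_traj \<eta> \<Theta> x c P T) (\<lambda>h. \<Sum>t<T. F t (take t h) (h ! t))
      + measure_pmf.expectation (exp4_traj \<eta> \<Theta> x c P T) (round_expectation \<eta> \<Theta> x c P F T)"
    using support by (intro expectation_pmf_add) auto
  finally show ?case using Suc by simp
qed

lemma sum_weights_fiber:
  assumes "finite \<Theta>"
  shows "(\<Sum>\<theta>\<in>\<Theta>. if a = \<theta> xt then w \<theta> * g (\<theta> xt) else 0) = policy_mass \<Theta> w xt a * (g a :: real)"
proof -
  have "(\<Sum>\<theta>\<in>\<Theta>. if a = \<theta> xt then w \<theta> * g (\<theta> xt) else 0) = (\<Sum>\<theta>\<in>{\<theta>\<in>\<Theta>. \<theta> xt = a}. w \<theta> * g a)"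
    using assms by (subst sum.inter_filter[symmetric]) (auto intro: sum.cong)
  then show ?thesis by (simp add: policy_mass_def sum_distrib_right)
qed

lemma policy_mass_pos:
  assumes "finite \<Theta>" "\<forall>\<theta>\<in>\<Theta>. 0 < w \<theta>" "\<theta> \<in> \<Theta>"
  shows "0 < policy_mass \<Theta> w xt (\<theta> xt)"
  unfolding policy_mass_def using assms by (intro sum_pos) auto

lemma loss_estimate_nonneg:
  assumes "0 \<le> l" "\<forall>\<theta>. 0 \<le> w \<theta>"
  shows "0 \<le> loss_estimate \<Theta> w xt tht l \<theta>"
  using assms unfolding loss_estimate_def policy_mass_def by (simp add: sum_nonneg)

lemma weighted_loss_estimate:
  assumes fin: "finite \<Theta>" and w: "\<forall>\<theta>\<in>\<Theta>. 0 < w \<theta>" and tht: "tht \<in> \<Theta>"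
  shows "(\<Sum>\<theta>\<in>\<Theta>. w \<theta> * loss_estimate \<Theta> w xt tht l \<theta>) = l"
proof -
  have "w \<theta> * loss_estimate \<Theta> w xt tht l \<theta>
      = (if tht xt = \<theta> xt then w \<theta> * (l / policy_mass \<Theta> w xt (\<theta> xt)) else 0)" for \<theta>
    by (simp add: loss_estimate_def)
  then show ?thesis
    using sum_weights_fiber[OF fin, of "tht xt" xt w "\<lambda>a. l / policy_mass \<Theta> w xt a"]
      policy_mass_pos[OF fin w tht, of xt]
    by simp
qed

lemma weighted_loss_estimate_sq:
  assumes fin: "finite \<Theta>" and w: "\<forall>\<theta>\<in>\<Theta>. 0 < w \<theta>" and tht: "tht \<in> \<Theta>"
  shows "(\<Sum>\<theta>\<in>\<Theta>. w \<theta> * (loss_estimate \<Theta> w xt tht l \<theta>)\<^sup>2) = l\<^sup>2 / policy_mass \<Theta> w xt (tht xt)"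
proof -
  have "w \<theta> * (loss_estimate \<Theta> w xt tht l \<theta>)\<^sup>2
      = (if tht xt = \<theta> xt then w \<theta> * (l / policy_mass \<Theta> w xt (\<theta> xt))\<^sup>2 else 0)" for \<theta>
    by (simp add: loss_estimate_def)
  then show ?thesis
    using sum_weights_fiber[OF fin, of "tht xt" xt w "\<lambda>a. (l / policy_mass \<Theta> w xt a)\<^sup>2"]
      policy_mass_pos[OF fin w tht, of xt]
    by (simp add: power2_eq_square)
qed

lemma sum_weight_div_policy_mass:
  assumes fin: "finite \<Theta>" and w: "\<forall>\<theta>\<in>\<Theta>. 0 < w \<theta>"
  shows "(\<Sum>\<theta>\<in>\<Theta>. w \<theta> / policy_mass \<Theta> w xt (\<theta> xt)) = real (card ((\<lambda>\<theta>. \<theta> xt) ` \<Theta>))"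
proof -
  have "(\<Sum>\<theta>\<in>\<Theta>. w \<theta> / policy_mass \<Theta> w xt (\<theta> xt))
      = (\<Sum>a\<in>(\<lambda>\<theta>. \<theta> xt) ` \<Theta>. \<Sum>\<theta>\<in>{\<theta>\<in>\<Theta>. \<theta> xt = a}. w \<theta> / policy_mass \<Theta> w xt (\<theta> xt))"
    using fin by (rule sum.image_gen)
  also have "\<dots> = (\<Sum>a\<in>(\<lambda>\<theta>. \<theta> xt) ` \<Theta>. 1)"
  proof (rule sum.cong[OF refl])
    fix a assume "a \<in> (\<lambda>\<theta>. \<theta> xt) ` \<Theta>"
    then obtain \<theta> where "\<theta> \<in> \<Theta>" and a: "a = \<theta> xt" by blast
    then have "0 < policy_mass \<Theta> w xt a" using policy_mass_pos[OF fin w] by blast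
    moreover have "(\<Sum>\<theta>\<in>{\<theta>\<in>\<Theta>. \<theta> xt = a}. w \<theta> / policy_mass \<Theta> w xt (\<theta> xt))
        = policy_mass \<Theta> w xt a / policy_mass \<Theta> w xt a"
      unfolding policy_mass_def sum_divide_distrib by (intro sum.cong) auto
    ultimately show "(\<Sum>\<theta>\<in>{\<theta>\<in>\<Theta>. \<theta> xt = a}. w \<theta> / policy_mass \<Theta> w xt (\<theta> xt)) = 1"
      by simp
  qed
  finally show ?thesis by simp
qed

text \<open>Per-round gap between the realised regret and the Hedge bound on the estimated losses,
  \<open>\<alpha>\<close> being the weight of the second-order term. Since the estimate is unbiased, its
  conditional expectation reduces to the second moment \<open>\<alpha> \<Sum> w c\<^sup>2 / (p q)\<close>.\<close>
definition estimate_excess :: "real \<Rightarrow> ('x \<Rightarrow> nat) \<Rightarrow> real \<Rightarrow> ('x \<Rightarrow> nat) set \<Rightarrow> (nat \<Rightarrow> 'x)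
    \<Rightarrow> (nat \<Rightarrow> nat \<Rightarrow> real) \<Rightarrow> nat \<Rightarrow> 'x round_rec list \<Rightarrow> 'x round_rec \<Rightarrow> real" where
  "estimate_excess \<alpha> \<theta>s \<eta> \<Theta> x c t h r =
     (let w = exp4_weights \<eta> \<Theta> x (observations c x h) t;
          L = loss_estimate \<Theta> w (x t) (fst r) (ind_loss c x t (snd r) (fst r))
      in \<alpha> * (\<Sum>\<theta>\<in>\<Theta>. w \<theta> * (L \<theta>)\<^sup>2) + L \<theta>s - ind_loss c x t (snd r) \<theta>s)"

lemma round_expectation_estimate_excess:
  assumes fin: "finite \<Theta>" and \<theta>s: "\<theta>s \<in> \<Theta>" and p: "0 < P t h" "P t h \<le> 1"
    and w_def: "w = exp4_weights \<eta> \<Theta> x (observations c x h) t"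
  shows "round_expectation \<eta> \<Theta> x c P (estimate_excess \<alpha> \<theta>s \<eta> \<Theta> x c) t h
    = \<alpha> / P t h * (\<Sum>\<theta>\<in>\<Theta>. w \<theta> * (c t (\<theta> (x t)))\<^sup>2 / policy_mass \<Theta> w (x t) (\<theta> (x t)))"
proof -
  have ne: "\<Theta> \<noteq> {}" using \<theta>s by auto
  note simplex = exp4_weights_simplex[OF fin ne, of \<eta> x "observations c x h" t, folded w_def]
  define q where "q = policy_mass \<Theta> w (x t)"
  define a where "a = \<theta>s (x t)"
  define p where "p = P t h"
  have coin: "measure_pmf.expectation (bernoulli_pmf p) (\<lambda>b. estimate_excess \<alpha> \<theta>s \<eta> \<Theta> x c t h (\<theta>, p, b))
      = \<alpha> / p * (w \<theta> * (c t (\<theta> (x t)))\<^sup>2 / q (\<theta> (x t))) / w \<theta>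
        + (if a = \<theta> (x t) then c t (\<theta> (x t)) / q a else 0) - c t a"
    if "\<theta> \<in> \<Theta>" for \<theta>
  proof -
    have "0 < w \<theta>" using simplex that by blast
    moreover have "estimate_excess \<alpha> \<theta>s \<eta> \<Theta> x c t h (\<theta>, p, True)
        = \<alpha> * (c t (\<theta> (x t)) / p)\<^sup>2 / q (\<theta> (x t))
          + (if a = \<theta> (x t) then c t (\<theta> (x t)) / p / q a else 0) - c t a / p"
    proof -
      have "loss_estimate \<Theta> w (x t) \<theta> l \<theta>s = (if a = \<theta> (x t) then l / q a else 0)" for l
        by (simp add: loss_estimate_def a_def q_def)
      then show ?thesis
        using weighted_loss_estimate_sq[OF fin _ that, of w "x t" "c t (\<theta> (x t)) / p"] simplex
        by (simp add: estimate_excess_def ind_loss_def q_def a_def w_def[symmetric])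
    qed
    moreover have "estimate_excess \<alpha> \<theta>s \<eta> \<Theta> x c t h (\<theta>, p, False) = 0"
      by (simp add: estimate_excess_def ind_loss_def loss_estimate_def)
    ultimately show ?thesis
      using p unfolding p_def by (simp add: field_simps power2_eq_square)
  qed
  have "round_expectation \<eta> \<Theta> x c P (estimate_excess \<alpha> \<theta>s \<eta> \<Theta> x c) t h
      = (\<Sum>\<theta>\<in>\<Theta>. \<alpha> / p * (w \<theta> * (c t (\<theta> (x t)))\<^sup>2 / q (\<theta> (x t)))
          + (if a = \<theta> (x t) then w \<theta> * (c t (\<theta> (x t)) / q a) else 0) - w \<theta> * c t a)"
    unfolding round_expectation_def embed_exp4_weights(3)[OF fin ne w_def] w_def[symmetric] p_def[symmetric]
    using simplex by (intro sum.cong) (auto simp: coin field_simps)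
  also have "\<dots> = \<alpha> / p * (\<Sum>\<theta>\<in>\<Theta>. w \<theta> * (c t (\<theta> (x t)))\<^sup>2 / q (\<theta> (x t)))
      + (\<Sum>\<theta>\<in>\<Theta>. if a = \<theta> (x t) then w \<theta> * (c t (\<theta> (x t)) / q a) else 0) - sum w \<Theta> * c t a"
    by (simp add: sum.distrib sum_subtractf sum_distrib_left sum_distrib_right)
  also have "(\<Sum>\<theta>\<in>\<Theta>. if a = \<theta> (x t) then w \<theta> * (c t (\<theta> (x t)) / q a) else 0) = c t a"
    using sum_weights_fiber[OF fin, of a "x t" w "\<lambda>b. c t b / q a"]
      policy_mass_pos[OF fin conjunct1[OF simplex] \<theta>s, of "x t"]
    by (simp add: q_def a_def)
  finally show ?thesis using simplex by (simp add: q_def p_def)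
qed

lemma round_expectation_estimate_excess_le:
  assumes fin: "finite \<Theta>" and \<theta>s: "\<theta>s \<in> \<Theta>" and K: "\<forall>\<theta>\<in>\<Theta>. \<forall>z. \<theta> z < K"
    and c: "\<forall>t a. a < K \<longrightarrow> 0 \<le> c t a \<and> c t a \<le> 1"
    and p: "0 < P t h" "P t h \<le> 1" "1 / P t h \<le> \<rho>" and \<alpha>: "0 \<le> \<alpha>"
  shows "round_expectation \<eta> \<Theta> x c P (estimate_excess \<alpha> \<theta>s \<eta> \<Theta> x c) t h \<le> \<alpha> * \<rho> * real K"
proof -
  have ne: "\<Theta> \<noteq> {}" using \<theta>s by auto
  define w where "w = exp4_weights \<eta> \<Theta> x (observations c x h) t"
  note simplex = exp4_weights_simplex[OF fin ne, of \<eta> x "observations c x h" t, folded w_def]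
  have "(\<Sum>\<theta>\<in>\<Theta>. w \<theta> * (c t (\<theta> (x t)))\<^sup>2 / policy_mass \<Theta> w (x t) (\<theta> (x t)))
      \<le> (\<Sum>\<theta>\<in>\<Theta>. w \<theta> / policy_mass \<Theta> w (x t) (\<theta> (x t)))"
  proof (intro sum_mono divide_right_mono)
    fix \<theta> assume "\<theta> \<in> \<Theta>"
    moreover from this have "(c t (\<theta> (x t)))\<^sup>2 \<le> 1" using K c by (simp add: abs_square_le_1)
    ultimately show "w \<theta> * (c t (\<theta> (x t)))\<^sup>2 \<le> w \<theta>" "0 \<le> policy_mass \<Theta> w (x t) (\<theta> (x t))"
      using simplex policy_mass_pos[OF fin, of w] by (auto intro: less_imp_le mult_left_le)
  qed
  also have "\<dots> = real (card ((\<lambda>\<theta>. \<theta> (x t)) ` \<Theta>))"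
    using simplex by (intro sum_weight_div_policy_mass fin) auto
  also have "\<dots> \<le> real K"
    using K card_mono[of "{..<K}" "(\<lambda>\<theta>. \<theta> (x t)) ` \<Theta>"] by auto
  finally have "\<alpha> / P t h * (\<Sum>\<theta>\<in>\<Theta>. w \<theta> * (c t (\<theta> (x t)))\<^sup>2 / policy_mass \<Theta> w (x t) (\<theta> (x t)))
      \<le> \<alpha> / P t h * real K"
    using \<alpha> p by (intro mult_left_mono) auto
  also have "\<dots> = \<alpha> * (1 / P t h) * real K" by simp
  also have "\<dots> \<le> \<alpha> * \<rho> * real K" using \<alpha> p by (intro mult_right_mono mult_left_mono) auto
  finally show ?thesis unfolding round_expectation_estimate_excess[where P = P and t = t and h = h, OF fin \<theta>s p(1,2) w_def] .
qed

text \<open>Along every history, Hedge on the estimates bounds the realised regret, because the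
  \<open>w\<close>-average of the estimates is the observed loss.\<close>
lemma exp4_regret_pathwise:
  fixes x :: "nat \<Rightarrow> 'x"
  assumes fin: "finite \<Theta>" and \<theta>s: "\<theta>s \<in> \<Theta>" and K: "\<forall>\<theta>\<in>\<Theta>. \<forall>z. \<theta> z < K"
    and c: "\<forall>t a. a < K \<longrightarrow> 0 \<le> c t a \<and> c t a \<le> 1"
    and P: "\<forall>t<T. \<forall>h. 0 < P t h" and \<eta>: "0 < \<eta>"
    and h: "h \<in> set_pmf (exp4_traj \<eta> \<Theta> x c P T)"
  shows "(\<Sum>t<T. ind_loss c x t (snd (h ! t)) (fst (h ! t)) - ind_loss c x t (snd (h ! t)) \<theta>s)
    \<le> ln (real (card \<Theta>)) / \<eta> + (\<Sum>t<T. estimate_excess (\<eta> / 2) \<theta>s \<eta> \<Theta> x c t (take t h) (h ! t))"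
proof -
  have ne: "\<Theta> \<noteq> {}" using \<theta>s by auto
  define w where "w t = exp4_weights \<eta> \<Theta> x (observations c x h) t" for t
  define loss where "loss t = ind_loss c x t (snd (h ! t))" for t
  define L where "L t = loss_estimate \<Theta> (w t) (x t) (fst (h ! t)) (loss t (fst (h ! t)))" for t
  note simplex = exp4_weights_simplex[OF fin ne, of \<eta> x "observations c x h"]
  have played: "fst (h ! t) \<in> \<Theta>" "fst (snd (h ! t)) = P t (take t h)" if "t < T" for t
    using exp4_traj_support[OF fin ne] h that by blast+
  have L_nonneg: "0 \<le> L t \<theta>" if "t < T" for t \<theta>
  proof -
    have "0 \<le> c t (fst (h ! t) (x t))" using c K played(1)[OF that] by blast
    moreover have "0 < P t (take t h)" using P that by blast
    ultimately have "0 \<le> loss t (fst (h ! t))"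
      using played(2)[OF that] by (simp add: loss_def ind_loss_def)
    then show ?thesis
      unfolding L_def w_def using exp4_weights_nonneg[OF fin ne] by (intro loss_estimate_nonneg) auto
  qed
  have "(\<Sum>t<T. \<Sum>\<theta>\<in>\<Theta>. w t \<theta> * L t \<theta>) - (\<Sum>t<T. L t \<theta>s)
      \<le> ln (real (card \<Theta>)) / \<eta> + \<eta> / 2 * (\<Sum>t<T. \<Sum>\<theta>\<in>\<Theta>. w t \<theta> * (L t \<theta>)\<^sup>2)"
    using fin \<theta>s \<eta> L_nonneg
    by (intro exponential_weights_regret)
       (auto simp: w_def L_def loss_def exp4_update_eq observations_def)
  moreover have "(\<Sum>\<theta>\<in>\<Theta>. w t \<theta> * L t \<theta>) = loss t (fst (h ! t))" if "t < T" for t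
    unfolding L_def w_def using simplex played(1)[OF that] by (intro weighted_loss_estimate fin) auto
  moreover have "estimate_excess (\<eta> / 2) \<theta>s \<eta> \<Theta> x c t (take t h) (h ! t)
      = \<eta> / 2 * (\<Sum>\<theta>\<in>\<Theta>. w t \<theta> * (L t \<theta>)\<^sup>2) + L t \<theta>s - loss t \<theta>s" for t
    by (simp add: estimate_excess_def Let_def exp4_weights_observations_take w_def L_def loss_def)
  ultimately show ?thesis
    by (simp add: loss_def sum.distrib sum_subtractf sum_distrib_left)
qed

lemma exp4_regret_le:
  fixes x :: "nat \<Rightarrow> 'x"
  assumes fin: "finite \<Theta>" and \<theta>s: "\<theta>s \<in> \<Theta>" and K: "\<forall>\<theta>\<in>\<Theta>. \<forall>z. \<theta> z < K"
    and c: "\<forall>t a. a < K \<longrightarrow> 0 \<le> c t a \<and> c t a \<le> 1"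
    and P: "\<forall>t<T. \<forall>h. 0 < P t h \<and> P t h \<le> 1 \<and> 1 / P t h \<le> \<rho>" and \<eta>: "0 < \<eta>"
  shows "exp4_regret \<eta> \<Theta> x c P T \<theta>s \<le> ln (real (card \<Theta>)) / \<eta> + real T * (\<eta> / 2 * \<rho> * real K)"
proof -
  have ne: "\<Theta> \<noteq> {}" using \<theta>s by auto
  note fin_traj = finite_set_pmf_exp4_traj[OF fin ne]
  define F where "F = estimate_excess (\<eta> / 2) \<theta>s \<eta> \<Theta> x c"
  have "exp4_regret \<eta> \<Theta> x c P T \<theta>s \<le> measure_pmf.expectation (exp4_traj \<eta> \<Theta> x c P T)
      (\<lambda>h. ln (real (card \<Theta>)) / \<eta> + (\<Sum>t<T. F t (take t h) (h ! t)))"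
    unfolding exp4_regret_def F_def using P \<eta>
    by (intro expectation_pmf_mono fin_traj exp4_regret_pathwise[OF fin \<theta>s K c]) auto
  also have "\<dots> = ln (real (card \<Theta>)) / \<eta>
      + (\<Sum>t<T. measure_pmf.expectation (exp4_traj \<eta> \<Theta> x c P t) (round_expectation \<eta> \<Theta> x c P F t))"
    using fin_traj by (simp add: expectation_pmf_add expectation_exp4_traj_sum[OF fin ne])
  also have "\<dots> \<le> ln (real (card \<Theta>)) / \<eta> + (\<Sum>t<T. \<eta> / 2 * \<rho> * real K)"
  proof (intro add_left_mono sum_mono)
    fix t assume "t \<in> {..<T}"
    then have "round_expectation \<eta> \<Theta> x c P F t h \<le> \<eta> / 2 * \<rho> * real K" for h
      unfolding F_def using P \<eta> by (intro round_expectation_estimate_excess_le[OF fin \<theta>s K c]) auto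
    then show "measure_pmf.expectation (exp4_traj \<eta> \<Theta> x c P t) (round_expectation \<eta> \<Theta> x c P F t)
        \<le> \<eta> / 2 * \<rho> * real K"
      using expectation_pmf_mono[OF fin_traj, where g = "\<lambda>_. \<eta> / 2 * \<rho> * real K"] by simp
  qed
  finally show ?thesis by simp
qed

lemma exp4_regret_singleton: "exp4_regret \<eta> {\<theta>} x c P T \<theta> = 0"
proof -
  have "measure_pmf.expectation (exp4_traj \<eta> {\<theta>} x c P T)
      (\<lambda>h. \<Sum>t<T. ind_loss c x t (snd (h ! t)) (fst (h ! t)) - ind_loss c x t (snd (h ! t)) \<theta>)
    = measure_pmf.expectation (exp4_traj \<eta> {\<theta>} x c P T) (\<lambda>_. 0)"
    using exp4_traj_support[of "{\<theta>}" \<eta> x c P T] by (intro expectation_pmf_cong) auto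
  then show ?thesis by (simp add: exp4_regret_def)
qed

text \<open>The learning rate \<open>\<eta> = \<surd>(2 A / (\<rho> K T))\<close> balances the two terms of the regret bound.\<close>
lemma tuned_learning_rate_bound:
  fixes A \<rho> K T :: real
  assumes A: "0 < A" and \<rho>: "0 < \<rho>" and KT: "0 < K * T"
  defines "\<eta> \<equiv> sqrt (2 * A / (\<rho> * K * T))"
  shows "A / \<eta> + T * (\<eta> / 2 * \<rho> * K) \<le> \<rho> powr (1/2) * (2 * sqrt (K * T * A))"
proof -
  define B where "B = \<rho> * K * T"
  have B: "0 < B" unfolding B_def using \<rho> KT by (simp add: mult.assoc)
  have \<eta>2: "\<eta>\<^sup>2 = 2 * A / B" unfolding \<eta>_def B_def using A B B_def by simp
  have \<eta>_pos: "0 < \<eta>" unfolding \<eta>_def using A B B_def by simp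
  have "A = \<eta>\<^sup>2 * B / 2" using \<eta>2 B by simp
  then have "A / \<eta> + T * (\<eta> / 2 * \<rho> * K) = \<eta> * B"
    using \<eta>_pos by (simp add: B_def power2_eq_square field_simps)
  also have "\<eta> * B = sqrt (2 * A * B)"
    using \<eta>_pos \<eta>2 B by (intro real_sqrt_unique[symmetric]) (simp_all add: power_mult_distrib power2_eq_square field_simps)
  also have "\<dots> \<le> sqrt (4 * A * B)" using A B by simp
  also have "\<dots> = 2 * sqrt (A * B)" by (simp add: real_sqrt_mult)
  also have "sqrt (A * B) = sqrt \<rho> * sqrt (K * T * A)"
    unfolding B_def by (simp add: real_sqrt_mult[symmetric] algebra_simps)
  also have "2 * (sqrt \<rho> * sqrt (K * T * A)) = \<rho> powr (1/2) * (2 * sqrt (K * T * A))"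
    using \<rho> by (simp add: powr_half_sqrt)
  finally show ?thesis .
qed

lemma exp4_regret_tuned:
  assumes fin: "finite \<Theta>" and \<theta>s: "\<theta>s \<in> \<Theta>" and K: "\<forall>\<theta>\<in>\<Theta>. \<forall>z. \<theta> z < K"
    and c: "\<forall>t a. a < K \<longrightarrow> 0 \<le> c t a \<and> c t a \<le> 1"
    and P: "\<forall>t<T. \<forall>h. 0 < P t h \<and> P t h \<le> 1 \<and> 1 / P t h \<le> \<rho>"
  shows "exp4_regret (sqrt (2 * ln (real (card \<Theta>)) / (\<rho> * real K * real T))) \<Theta> x c P T \<theta>s
    \<le> \<rho> powr (1/2) * (2 * sqrt (real K * real T * ln (real (card \<Theta>))))"
proof (cases "T = 0 \<or> card \<Theta> = 1")
  case True
  then have "exp4_regret \<eta> \<Theta> x c P T \<theta>s = 0" for \<eta>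
  proof
    assume "card \<Theta> = 1"
    then have "\<Theta> = {\<theta>s}" using \<theta>s by (metis card_1_singletonE singletonD)
    then show ?thesis by (simp add: exp4_regret_singleton)
  qed (simp add: exp4_regret_def)
  then show ?thesis using True by auto
next
  case False
  then have "0 < T" "2 \<le> card \<Theta>"
    using fin \<theta>s card_gt_0_iff[of \<Theta>] by auto
  moreover have "1 \<le> \<rho>"
  proof -
    have "0 < P 0 [] \<and> P 0 [] \<le> 1 \<and> 1 / P 0 [] \<le> \<rho>" using P \<open>0 < T\<close> by blast
    then show ?thesis by (smt (verit) le_divide_eq_1_pos)
  qed
  moreover have "0 < K" using K \<theta>s by (metis gr_zeroI not_less0)
  ultimately have "0 < ln (real (card \<Theta>))" "0 < \<rho>" "0 < real K * real T" by auto
  moreover from this have "0 < sqrt (2 * ln (real (card \<Theta>)) / (\<rho> * real K * real T))"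
    by (intro real_sqrt_gt_zero divide_pos_pos) (simp_all add: mult.assoc)
  ultimately show ?thesis
    using order_trans[OF exp4_regret_le[OF fin \<theta>s K c P] tuned_learning_rate_bound] by blast
qed

theorem lemma6:
  shows "\<exists>(C::real) (eta :: nat \<Rightarrow> nat \<Rightarrow> nat \<Rightarrow> real \<Rightarrow> real).
    \<forall>(T::nat) (K::nat) (\<Theta>::('x \<Rightarrow> nat) set) (x::nat \<Rightarrow> 'x) (c::nat \<Rightarrow> nat \<Rightarrow> real).
      finite \<Theta> \<and> \<Theta> \<noteq> {} \<and> (\<forall>\<theta>\<in>\<Theta>. \<forall>z. \<theta> z < K) \<and>
      (\<forall>t a. a < K \<longrightarrow> 0 \<le> c t a \<and> c t a \<le> 1) \<longrightarrow>
        (\<forall>\<theta>\<in>\<Theta>. exp4_regret (eta T K (card \<Theta>) 1) \<Theta> x c (\<lambda>_ _. 1) T \<theta>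
             \<le> C * sqrt (real K * real T * ln (real (card \<Theta>))))
      \<and> (\<forall>(\<rho>::real) P. (\<forall>t<T. \<forall>h. 0 < P t h \<and> P t h \<le> 1 \<and> 1 / P t h \<le> \<rho>) \<longrightarrow>
          (\<forall>\<theta>\<in>\<Theta>. exp4_regret (eta T K (card \<Theta>) \<rho>) \<Theta> x c P T \<theta>
             \<le> \<rho> powr (1/2) * (C * sqrt (real K * real T * ln (real (card \<Theta>))))))"
proof (intro exI[of _ 2] exI[of _ "\<lambda>T K N \<rho>. sqrt (2 * ln (real N) / (\<rho> * real K * real T))"]
    allI impI conjI ballI)
  fix T K :: nat and \<Theta> :: "('x \<Rightarrow> nat) set" and x :: "nat \<Rightarrow> 'x" and c :: "nat \<Rightarrow> nat \<Rightarrow> real" and \<theta>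
  assume "finite \<Theta> \<and> \<Theta> \<noteq> {} \<and> (\<forall>\<theta>\<in>\<Theta>. \<forall>z. \<theta> z < K) \<and> (\<forall>t a. a < K \<longrightarrow> 0 \<le> c t a \<and> c t a \<le> 1)"
    and "\<theta> \<in> \<Theta>"
  then show "exp4_regret (sqrt (2 * ln (real (card \<Theta>)) / (1 * real K * real T))) \<Theta> x c (\<lambda>_ _. 1) T \<theta>
      \<le> 2 * sqrt (real K * real T * ln (real (card \<Theta>)))"
    using exp4_regret_tuned[of \<Theta> \<theta> K c T "\<lambda>_ _. 1" 1 x] by simp
next
  fix T K :: nat and \<Theta> :: "('x \<Rightarrow> nat) set" and x :: "nat \<Rightarrow> 'x" and c :: "nat \<Rightarrow> nat \<Rightarrow> real" and \<theta>
    and \<rho> :: real and P :: "nat \<Rightarrow> 'x round_rec list \<Rightarrow> real"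
  assume "finite \<Theta> \<and> \<Theta> \<noteq> {} \<and> (\<forall>\<theta>\<in>\<Theta>. \<forall>z. \<theta> z < K) \<and> (\<forall>t a. a < K \<longrightarrow> 0 \<le> c t a \<and> c t a \<le> 1)"
    and "\<forall>t<T. \<forall>h. 0 < P t h \<and> P t h \<le> 1 \<and> 1 / P t h \<le> \<rho>" and "\<theta> \<in> \<Theta>"
  then show "exp4_regret (sqrt (2 * ln (real (card \<Theta>)) / (\<rho> * real K * real T))) \<Theta> x c P T \<theta>
      \<le> \<rho> powr (1/2) * (2 * sqrt (real K * real T * ln (real (card \<Theta>))))"
    using exp4_regret_tuned by blast
qed

end
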